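(* Fix $j\ge1$. For every $k\in\mathbb{N}$ with $k+1\ge j$, $$A(k)\le\log(p_{k+1})\exp\!\left(c_1-\frac1{p_j}+\frac{5}{\log(p_{k+1})}\right).$$
   Context: $p_1=2<p_2=3<\cdots$ is the increasing enumeration of the primes. For fixed $j$ and $k\ge j-1$, $A(k)=\prod_{1\le\ell\le k+1,\ \ell\ne j}\frac{p_\ell+1}{p_\ell}$. The constant $c_1\approx0.261497$ is the Meissel–Mertens constant, i.e. $c_1=\lim_{x\to\infty}\big(\sum_{p\le x}1/p-\log\log x\big)$. *)

theory Defs
  imports "HOL-Analysis.Analysis" "HOL-Computational_Algebra.Primes"
begin

(* p n = the n-th prime, 1-indexed: p 1 = 2, p 2 = 3, ... *)
definition nthprime :: "nat \<Rightarrow> nat" where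
  "nthprime n = enumerate {q::nat. prime q} (n - 1)"

definition meissel_mertens :: real where
  "meissel_mertens = Lim at_top
     (\<lambda>x::real. (\<Sum>q\<in>{q::nat. prime q \<and> real q \<le> x}. 1 / real q) - ln (ln x))"

definition A :: "nat \<Rightarrow> nat \<Rightarrow> real" where
  "A j k = (\<Prod>l\<in>{1..k+1} - {j}. (real (nthprime l) + 1) / real (nthprime l))"

end

theory Submission
  imports Defs "HOL-Real_Asymp.Real_Asymp"
begin

(* Since 1 + 1/p \<le> exp (1/p), the product is at most exp (S P - 1/p_j), where P = p_(k+1) and
   S x is the sum of 1/p over the primes p \<le> x; so it suffices to show S P \<le> ln ln P + c_1 + 5 / ln P.
   Legendre's formula for ln n!, crude Stirling bounds and Chebyshev's estimate \<theta> n \<le> n ln 4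
   (via the middle binomial coefficient) give Mertens' first theorem
   ln n - 3 \<le> \<Sum>_(p\<le>n) ln p / p \<le> ln n + ln 4.  Abel summation against 1 / ln turns this into
   \<bar>R m - R n\<bar> \<le> 5 / ln m for 2 \<le> m \<le> n, where R n = S n - ln ln n; hence R converges, its
   limit is c_1, and R P \<le> c_1 + 5 / ln P. *)

lemma sum_primes_atMost_Suc:
  fixes h :: "nat \<Rightarrow> 'a::comm_monoid_add"
  shows "(\<Sum>p | prime p \<and> p \<le> Suc n. h p) =
           (\<Sum>p | prime p \<and> p \<le> n. h p) + (if prime (Suc n) then h (Suc n) else 0)"
proof (cases "prime (Suc n)")
  case True
  hence "{p. prime p \<and> p \<le> Suc n} = insert (Suc n) {p. prime p \<and> p \<le> n}"
    by (auto simp: le_Suc_eq)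
  thus ?thesis using True by (simp add: add.commute)
next
  case False
  hence "{p. prime p \<and> p \<le> Suc n} = {p. prime p \<and> p \<le> n}"
    by (auto simp: le_Suc_eq)
  thus ?thesis using False by simp
qed

lemma ln_Suc_minus_ln_le:
  assumes "n \<ge> 1"
  shows "ln (real (Suc n)) - ln (real n) \<le> 1 / real n"
proof -
  have "ln (real (Suc n)) - ln (real n) = ln (real (Suc n) / real n)"
    using assms by (simp add: ln_div)
  also have "\<dots> = ln (1 + 1 / real n)"
    using assms by (simp add: field_simps)
  also have "\<dots> \<le> 1 / real n"
    by (rule ln_add_one_self_le_self) simp
  finally show ?thesis .
qed

lemma ln_fact_ge: "real n * ln (real n) - real n \<le> ln (fact n)"
proof (induction n)
  case (Suc n)
  have "ln (fact (Suc n) :: real) = ln (fact n) + ln (real (Suc n))"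
    by (simp add: ln_mult)
  moreover have "real n * (ln (real (Suc n)) - ln (real n)) \<le> 1"
    using ln_Suc_minus_ln_le[of n] by (cases "n = 0") (simp_all add: field_simps)
  ultimately show ?case using Suc.IH by (simp add: algebra_simps)
qed simp

lemma ln_fact_le: "ln (fact n :: real) \<le> real n * ln (real n)"
proof (induction n)
  case (Suc n)
  have "ln (fact (Suc n) :: real) = ln (fact n) + ln (real (Suc n))"
    by (simp add: ln_mult)
  moreover have "real n * ln (real n) \<le> real n * ln (real (Suc n))"
    by (cases "n = 0") (auto intro: mult_left_mono)
  ultimately show ?case using Suc.IH by (simp add: algebra_simps)
qed simp

lemma sum_inverse_powers:
  fixes p :: real
  assumes "p > 1"
  shows "(\<Sum>i=1..n. 1 / p ^ i) = (1 - 1 / p ^ n) / (p - 1)"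
proof (induction n)
  case (Suc n)
  have "(\<Sum>i=1..Suc n. 1 / p ^ i) = (1 - 1 / p ^ n) / (p - 1) + 1 / p ^ Suc n"
    using Suc.IH by simp
  also have "\<dots> = (1 - 1 / p ^ Suc n) / (p - 1)"
    using assms by (simp add: field_simps)
  finally show ?case .
qed simp

lemma ln_div_Suc_times_le_telescoping:
  assumes "n \<ge> 1"
  shows "ln (real (Suc n)) / (real (Suc n) * real n)
           \<le> (ln (real n) + 2) / real n - (ln (real (Suc n)) + 2) / real (Suc n)"
proof -
  have n: "real n \<ge> 1" using assms by simp
  have "(real n + 1) * (ln (real (Suc n)) - ln (real n)) \<le> (real n + 1) / real n"
    using ln_Suc_minus_ln_le[OF assms] n by (simp add: divide_simps mult_left_mono)
  also have "\<dots> \<le> 2" using n by (simp add: divide_simps)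
  finally have "0 \<le> (2 - (real n + 1) * (ln (real (Suc n)) - ln (real n))) / (real n * (real n + 1))"
    using n by simp
  moreover have "(ln (real n) + 2) / real n - (ln (real (Suc n)) + 2) / real (Suc n)
                   - ln (real (Suc n)) / (real (Suc n) * real n)
                 = (2 - (real n + 1) * (ln (real (Suc n)) - ln (real n))) / (real n * (real n + 1))"
    using n by (simp add: field_simps)
      (simp add: add_divide_distrib[symmetric] diff_divide_distrib[symmetric] algebra_simps)
  ultimately show ?thesis by linarith
qed

lemma sum_ln_div_times_pred_le:
  "(\<Sum>k=2..n. ln (real k) / (real k * (real k - 1))) \<le> 2"
proof (cases "n \<ge> 1")
  case True
  have "(\<Sum>k=2..n. ln (real k) / (real k * (real k - 1))) \<le> 2 - (ln (real n) + 2) / real n"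
    using True
  proof (induction n rule: dec_induct)
    case (step n)
    have "{2..Suc n} = insert (Suc n) {2..n}" using step.hyps by auto
    hence "(\<Sum>k=2..Suc n. ln (real k) / (real k * (real k - 1))) =
             (\<Sum>k=2..n. ln (real k) / (real k * (real k - 1))) + ln (real (Suc n)) / (real (Suc n) * real n)"
      by simp
    thus ?case using step.IH ln_div_Suc_times_le_telescoping[OF step.hyps(1)] by linarith
  qed simp
  also have "\<dots> \<le> 2" using True by simp
  finally show ?thesis .
qed simp

lemma ln_4_le: "ln (4::real) \<le> 3/2"
proof -
  have "2 \<le> 1 + 3/4 + (3/4)\<^sup>2 / (2::real)" by (simp add: power2_eq_square)
  also have "\<dots> \<le> exp (3/4::real)" by (rule exp_lower_Taylor_quadratic) simp
  finally have "ln (2::real) \<le> ln (exp (3/4))" by (subst ln_le_cancel_iff) auto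
  moreover have "ln (4::real) = 2 * ln 2" using ln_realpow[of 2 2] by simp
  ultimately show ?thesis by simp
qed

section \<open>Legendre's formula\<close>

lemma sum_indicator_dvd_eq_div:
  assumes "d > 0"
  shows "(\<Sum>k=1..n. if d dvd k then 1 else 0) = (n div d :: nat)"
proof (induction n)
  case (Suc n)
  thus ?case using assms by (simp add: div_Suc dvd_eq_mod_eq_0)
qed simp

lemma multiplicity_le_self:
  assumes "prime (p::nat)" "k \<ge> 1"
  shows "multiplicity p k \<le> k"
proof -
  have "multiplicity p k < 2 ^ multiplicity p k" by (rule less_exp)
  also have "\<dots> \<le> p ^ multiplicity p k" using prime_ge_2_nat[OF assms(1)] by (simp add: power_mono)
  also have "\<dots> \<le> k" using assms(2) by (intro dvd_imp_le multiplicity_dvd) simp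
  finally show ?thesis by simp
qed

lemma multiplicity_eq_count_prime_power_dvd:
  assumes "prime (p::nat)" "1 \<le> k" "k \<le> n"
  shows "multiplicity p k = (\<Sum>i=1..n. if p ^ i dvd k then 1 else 0)"
proof -
  have "k \<noteq> 0" "\<not> is_unit p" using assms not_prime_unit by auto
  hence "{1..n} \<inter> {i. p ^ i dvd k} = {1..multiplicity p k}"
    using multiplicity_le_self[OF assms(1,2)] assms(3)
    by (auto simp: power_dvd_iff_le_multiplicity)
  thus ?thesis by (simp add: sum.If_cases)
qed

lemma multiplicity_fact:
  assumes "prime (p::nat)"
  shows "multiplicity p (fact n) = (\<Sum>k=1..n. multiplicity p k)"
proof -
  have "multiplicity p (fact n) = multiplicity p (\<Prod>k=1..n. k)"
    by (simp add: fact_prod)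
  also have "\<dots> = (\<Sum>k=1..n. multiplicity p k)"
    using assms by (intro prime_elem_multiplicity_prod_distrib) auto
  finally show ?thesis .
qed

lemma multiplicity_fact_ge:
  assumes "prime (p::nat)"
  shows "n div p \<le> multiplicity p (fact n)"
proof -
  have "n div p = (\<Sum>k=1..n. if p dvd k then 1 else 0)"
    using sum_indicator_dvd_eq_div[of p n] prime_gt_0_nat[OF assms] by simp
  also have "\<dots> \<le> (\<Sum>k=1..n. multiplicity p k)"
  proof (rule sum_mono)
    fix k assume "k \<in> {1..n}"
    hence "k \<noteq> 0" "\<not> is_unit p" using assms not_prime_unit by auto
    thus "(if p dvd k then 1 else 0) \<le> multiplicity p k"
      using power_dvd_iff_le_multiplicity[of k p 1] by auto
  qed
  finally show ?thesis using multiplicity_fact[OF assms] by simp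
qed

lemma multiplicity_fact_le:
  assumes "prime (p::nat)"
  shows "real (multiplicity p (fact n)) \<le> real n / (real p - 1)"
proof -
  have p1: "real p > 1" using prime_gt_1_nat[OF assms] by simp
  have "multiplicity p (fact n) = (\<Sum>k=1..n. \<Sum>i=1..n. if p ^ i dvd k then 1 else 0)"
    unfolding multiplicity_fact[OF assms]
    by (intro sum.cong refl multiplicity_eq_count_prime_power_dvd[OF assms]) auto
  also have "\<dots> = (\<Sum>i=1..n. n div p ^ i)"
    using prime_gt_0_nat[OF assms] by (subst sum.swap) (intro sum.cong refl sum_indicator_dvd_eq_div; simp)
  finally have "real (multiplicity p (fact n)) = (\<Sum>i=1..n. real (n div p ^ i))" by simp
  also have "\<dots> \<le> (\<Sum>i=1..n. real n * (1 / real p ^ i))"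
  proof (rule sum_mono)
    fix i
    show "real (n div p ^ i) \<le> real n * (1 / real p ^ i)"
      using of_nat_div_le_of_nat[of n "p ^ i"] by simp
  qed
  also have "\<dots> = real n * ((1 - 1 / real p ^ n) / (real p - 1))"
    by (subst sum_distrib_left[symmetric]) (simp only: sum_inverse_powers[OF p1])
  also have "\<dots> \<le> real n * (1 / (real p - 1))"
    using p1 by (intro mult_left_mono divide_right_mono) auto
  finally show ?thesis by simp
qed

lemma ln_eq_sum_multiplicity:
  assumes "k > 0" "finite P" "\<forall>p\<in>P. prime p" "prime_factors k \<subseteq> P"
  shows "ln (real k) = (\<Sum>p\<in>P. real (multiplicity p k) * ln (real p))"
proof -
  have "real k = (\<Prod>p \<in> prime_factors k. real p ^ multiplicity p k)"
    by (subst prime_factorization_nat[OF assms(1)]) simp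
  also have "ln \<dots> = (\<Sum>p \<in> prime_factors k. ln (real p ^ multiplicity p k))"
    by (rule ln_prod) (auto dest: in_prime_factors_imp_prime simp: prime_gt_0_nat)
  also have "\<dots> = (\<Sum>p \<in> prime_factors k. real (multiplicity p k) * ln (real p))"
    by (intro sum.cong refl) (auto simp: prime_gt_0_nat ln_realpow)
  also have "\<dots> = (\<Sum>p\<in>P. real (multiplicity p k) * ln (real p))"
  proof (rule sum.mono_neutral_left)
    show "\<forall>p\<in>P - prime_factors k. real (multiplicity p k) * ln (real p) = 0"
      using assms by (auto simp: prime_factors_multiplicity)
  qed (use assms in auto)
  finally show ?thesis .
qed

lemma ln_fact_eq_sum_primes:
  "ln (fact n :: real) = (\<Sum>p | prime p \<and> p \<le> n. real (multiplicity p (fact n)) * ln (real p))"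
proof -
  have "prime_factors (fact n) \<subseteq> {p. prime p \<and> p \<le> n}"
  proof
    fix p assume "p \<in> prime_factors (fact n :: nat)"
    hence "prime p" "p dvd fact n" by auto
    thus "p \<in> {p. prime p \<and> p \<le> n}" using prime_dvd_fact_iff by blast
  qed
  hence "ln (real (fact n)) = (\<Sum>p | prime p \<and> p \<le> n. real (multiplicity p (fact n)) * ln (real p))"
    by (intro ln_eq_sum_multiplicity) auto
  thus ?thesis by (simp only: of_nat_fact)
qed

section \<open>Chebyshev's bound\<close>

definition chebyshev_theta :: "nat \<Rightarrow> real" where
  "chebyshev_theta n = (\<Sum>p | prime p \<and> p \<le> n. ln (real p))"

lemma prod_primes_dvd:
  assumes "finite S" "\<forall>p\<in>S. prime (p::nat)" "\<forall>p\<in>S. p dvd c"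
  shows "\<Prod>S dvd c"
  using assms
proof (induction S rule: finite_induct)
  case (insert q S)
  have "\<not> q dvd \<Prod>S"
  proof
    assume "q dvd \<Prod>S"
    then obtain r where "r \<in> S" "q dvd r"
      using prime_dvd_prod_iff[OF insert.hyps(1), of q id] insert.prems by auto
    thus False using insert.hyps insert.prems primes_dvd_imp_eq by blast
  qed
  hence "coprime q (\<Prod>S)" using insert.prems by (simp add: prime_imp_coprime)
  thus ?case using insert by (simp add: divides_mult)
qed simp

lemma binomial_middle_le: "(2*m+1) choose m \<le> 4 ^ m"
proof -
  have "(2*m+1) choose (m+1) = (2*m+1) choose m"
    using binomial_symmetric[of "m+1" "2*m+1"] by simp
  moreover have "(\<Sum>k\<in>{m, m+1}. (2*m+1) choose k) \<le> (\<Sum>k\<le>2*m+1. (2*m+1) choose k)"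
    by (rule sum_mono2) auto
  ultimately have "2 * ((2*m+1) choose m) \<le> 2 ^ (2*m+1)"
    by (simp only: choose_row_sum) simp
  thus ?thesis by (simp add: power_mult)
qed

lemma prod_primes_between_dvd_binomial:
  "\<Prod>{p. prime p \<and> m+1 < p \<and> p \<le> 2*m+1} dvd (2*m+1) choose m"
proof (rule prod_primes_dvd; clarify?)
  fix p assume p: "prime p" "m+1 < p" "p \<le> 2*m+1"
  have "fact m * fact (m+1) * ((2*m+1) choose m) = (fact (2*m+1) :: nat)"
    using binomial_fact_lemma[of m "2*m+1"] by (simp add: mult_2)
  moreover have "p dvd fact (2*m+1)" "\<not> p dvd fact m" "\<not> p dvd fact (m+1)"
    unfolding prime_dvd_fact_iff[OF p(1)] using p by simp_all
  ultimately show "p dvd (2*m+1) choose m"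
    using p(1) by (metis prime_dvd_mult_iff)
qed auto

lemma sum_ln_primes_between_le:
  "(\<Sum>p | prime p \<and> m+1 < p \<and> p \<le> 2*m+1. ln (real p)) \<le> real m * ln 4"
proof -
  let ?S = "{p. prime p \<and> m+1 < p \<and> p \<le> 2*m+1}"
  have "\<Prod>?S \<le> (2*m+1) choose m"
    by (rule dvd_imp_le[OF prod_primes_between_dvd_binomial]) (simp add: zero_less_binomial)
  hence "\<Prod>?S \<le> 4 ^ m" using binomial_middle_le[of m] by (rule order_trans)
  hence "real (\<Prod>?S) \<le> 4 ^ m" by (metis of_nat_le_iff of_nat_numeral of_nat_power)
  moreover have "real (\<Prod>?S) > 0"
    by (simp only: of_nat_0_less_iff) (auto intro: prod_pos dest: prime_gt_0_nat)
  ultimately have "ln (real (\<Prod>?S)) \<le> ln (4 ^ m)" by simp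
  moreover have "ln (real (\<Prod>?S)) = (\<Sum>p\<in>?S. ln (real p))"
    unfolding of_nat_prod by (rule ln_prod) (auto dest: prime_gt_0_nat)
  ultimately show ?thesis by (simp add: ln_realpow)
qed

lemma chebyshev_theta_Suc:
  "chebyshev_theta (Suc n) = chebyshev_theta n + (if prime (Suc n) then ln (real (Suc n)) else 0)"
  unfolding chebyshev_theta_def by (rule sum_primes_atMost_Suc)

lemma chebyshev_theta_odd:
  "chebyshev_theta (2*m+1) =
     chebyshev_theta (m+1) + (\<Sum>p | prime p \<and> m+1 < p \<and> p \<le> 2*m+1. ln (real p))"
proof -
  have "{p. prime p \<and> p \<le> 2*m+1} =
          {p. prime p \<and> p \<le> m+1} \<union> {p. prime p \<and> m+1 < p \<and> p \<le> 2*m+1}"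
    by auto
  thus ?thesis unfolding chebyshev_theta_def by (subst sum.union_disjoint[symmetric]) auto
qed

lemma chebyshev_theta_le: "chebyshev_theta n \<le> real n * ln 4"
proof (induction n rule: less_induct)
  case (less n)
  show ?case
  proof (cases "n \<le> 2")
    case True
    have "chebyshev_theta 0 = 0" by (simp add: chebyshev_theta_def)
    moreover from this have "chebyshev_theta 1 = 0" using chebyshev_theta_Suc[of 0] by simp
    moreover from this have "chebyshev_theta 2 = ln 2"
      using chebyshev_theta_Suc[of 1] two_is_prime_nat by (simp add: numeral_2_eq_2)
    moreover have "ln (2::real) \<le> 2 * ln 4"
    proof -
      have "ln (2::real) < ln 4" "0 < ln (4::real)" by simp_all
      thus ?thesis by linarith
    qed
    moreover have "n = 0 \<or> n = 1 \<or> n = 2" using True by auto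
    ultimately show ?thesis by auto
  next
    case False
    show ?thesis
    proof (cases "even n")
      case True
      then obtain k where k: "n = Suc k" using False by (cases n) auto
      have "\<not> prime n" using True False prime_odd_nat[of n] by auto
      hence "chebyshev_theta n = chebyshev_theta k" using chebyshev_theta_Suc[of k] k by simp
      also have "\<dots> \<le> real k * ln 4" using less k by simp
      also have "\<dots> \<le> real n * ln 4" using k by simp
      finally show ?thesis .
    next
      case odd: False
      then obtain m where m: "n = 2*m+1" by (rule oddE)
      hence "m + 1 < n" using False by simp
      hence "chebyshev_theta (m+1) \<le> real (m+1) * ln 4" by (rule less)
      thus ?thesis using m chebyshev_theta_odd[of m] sum_ln_primes_between_le[of m]
        by (simp add: algebra_simps)
    qed
  qed
qed

section \<open>Mertens' first theorem\<close>

definition mertens_sum :: "nat \<Rightarrow> real" where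
  "mertens_sum n = (\<Sum>p | prime p \<and> p \<le> n. ln (real p) / real p)"

lemma mertens_sum_Suc:
  "mertens_sum (Suc n) = mertens_sum n + (if prime (Suc n) then ln (real (Suc n)) / real (Suc n) else 0)"
  unfolding mertens_sum_def by (rule sum_primes_atMost_Suc)

lemma real_div_minus_one_less_div: "real n / real p - 1 < real (n div p)"
  using floor_correct[of "real n / real p"] by (simp add: floor_divide_of_nat_eq)

lemma mertens_sum_le:
  assumes "n \<ge> 1"
  shows "mertens_sum n \<le> ln (real n) + ln 4"
proof -
  have "real n * mertens_sum n - chebyshev_theta n =
          (\<Sum>p | prime p \<and> p \<le> n. (real n / real p - 1) * ln (real p))"
    unfolding mertens_sum_def chebyshev_theta_def
    by (simp add: sum_distrib_left sum_subtractf[symmetric] algebra_simps)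
  also have "\<dots> \<le> (\<Sum>p | prime p \<and> p \<le> n. real (multiplicity p (fact n)) * ln (real p))"
  proof (rule sum_mono)
    fix p assume "p \<in> {p. prime p \<and> p \<le> n}"
    hence p: "prime p" by simp
    have "real n / real p - 1 \<le> real (multiplicity p (fact n))"
      using real_div_minus_one_less_div[of n p] multiplicity_fact_ge[OF p, of n] by linarith
    thus "(real n / real p - 1) * ln (real p) \<le> real (multiplicity p (fact n)) * ln (real p)"
      using prime_ge_1_nat[OF p] by (intro mult_right_mono) auto
  qed
  also have "\<dots> = ln (fact n)" by (rule ln_fact_eq_sum_primes[symmetric])
  also have "\<dots> \<le> real n * ln (real n)" by (rule ln_fact_le)
  finally have "real n * mertens_sum n \<le> real n * (ln (real n) + ln 4)"
    using chebyshev_theta_le[of n] by (simp add: algebra_simps)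
  thus ?thesis using assms by simp
qed

lemma mertens_sum_ge:
  assumes "n \<ge> 1"
  shows "ln (real n) - 3 \<le> mertens_sum n"
proof -
  let ?r = "\<lambda>p. ln (real p) / (real p * (real p - 1))"
  have "real n * ln (real n) - real n \<le> ln (fact n)" by (rule ln_fact_ge)
  also have "\<dots> = (\<Sum>p | prime p \<and> p \<le> n. real (multiplicity p (fact n)) * ln (real p))"
    by (rule ln_fact_eq_sum_primes)
  also have "\<dots> \<le> (\<Sum>p | prime p \<and> p \<le> n. real n * (ln (real p) / real p + ?r p))"
  proof (rule sum_mono)
    fix p assume "p \<in> {p. prime p \<and> p \<le> n}"
    hence p: "prime p" by simp
    have p1: "real p > 1" using prime_gt_1_nat[OF p] by simp
    have "real (multiplicity p (fact n)) * ln (real p) \<le> real n / (real p - 1) * ln (real p)"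
      using p1 by (intro mult_right_mono multiplicity_fact_le[OF p]) simp
    also have "\<dots> = real n * (ln (real p) / real p + ?r p)"
      using p1 by (simp add: field_simps)
    finally show "real (multiplicity p (fact n)) * ln (real p) \<le> real n * (ln (real p) / real p + ?r p)" .
  qed
  also have "\<dots> = real n * mertens_sum n + real n * (\<Sum>p | prime p \<and> p \<le> n. ?r p)"
    unfolding mertens_sum_def by (simp add: sum_distrib_left sum.distrib distrib_left)
  also have "\<dots> \<le> real n * mertens_sum n + real n * 2"
  proof -
    have "(\<Sum>p | prime p \<and> p \<le> n. ?r p) \<le> (\<Sum>k=2..n. ?r k)"
      by (rule sum_mono2) (auto dest: prime_ge_2_nat)
    also have "\<dots> \<le> 2" by (rule sum_ln_div_times_pred_le)
    finally show ?thesis by (intro add_left_mono mult_left_mono) auto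
  qed
  finally have "real n * (ln (real n) - 3) \<le> real n * mertens_sum n"
    by (simp add: algebra_simps)
  thus ?thesis using assms by simp
qed

lemma mertens_sum_div_ln_bounds:
  assumes "n \<ge> 2"
  shows "1 - 3 / ln (real n) \<le> mertens_sum n / ln (real n)"
    and "mertens_sum n / ln (real n) \<le> 1 + 3/2 / ln (real n)"
proof -
  have l: "ln (real n) > 0" using assms by simp
  have "1 - 3 / ln (real n) = (ln (real n) - 3) / ln (real n)"
    using l by (simp add: field_simps)
  also have "\<dots> \<le> mertens_sum n / ln (real n)"
    using mertens_sum_ge[of n] assms l by (intro divide_right_mono) auto
  finally show "1 - 3 / ln (real n) \<le> mertens_sum n / ln (real n)" .
  have "mertens_sum n / ln (real n) \<le> (ln (real n) + 3/2) / ln (real n)"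
    using mertens_sum_le[of n] ln_4_le assms l by (intro divide_right_mono) auto
  also have "\<dots> = 1 + 3/2 / ln (real n)"
    using l by (simp add: field_simps)
  finally show "mertens_sum n / ln (real n) \<le> 1 + 3/2 / ln (real n)" .
qed

section \<open>Mertens' second theorem\<close>

definition prime_recip_sum :: "nat \<Rightarrow> real" where
  "prime_recip_sum n = (\<Sum>p | prime p \<and> p \<le> n. 1 / real p)"

definition mertens_remainder :: "nat \<Rightarrow> real" where
  "mertens_remainder n = prime_recip_sum n - ln (ln (real n))"

lemma prime_recip_sum_Suc:
  "prime_recip_sum (Suc n) = prime_recip_sum n + (if prime (Suc n) then 1 / real (Suc n) else 0)"
  unfolding prime_recip_sum_def by (rule sum_primes_atMost_Suc)

lemma prime_recip_sum_by_parts: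
  assumes "2 \<le> m" "m \<le> n"
  shows "prime_recip_sum n - prime_recip_sum m =
           mertens_sum n / ln (real n) - mertens_sum m / ln (real m)
           + (\<Sum>k=m..<n. mertens_sum k * (1 / ln (real k) - 1 / ln (real (Suc k))))"
  using assms(2)
proof (induction n rule: dec_induct)
  case (step n)
  have "ln (real (Suc n)) > 0" using step.hyps assms by simp
  hence "mertens_sum (Suc n) / ln (real (Suc n)) - mertens_sum n / ln (real (Suc n)) =
           (if prime (Suc n) then 1 / real (Suc n) else 0)"
    by (simp add: mertens_sum_Suc field_simps)
  thus ?case using step.hyps step.IH prime_recip_sum_Suc[of n] by (simp add: algebra_simps)
qed simp

lemma ln_diff_bounds:
  fixes a b :: real
  assumes "0 < a" "0 < b"
  shows "1 - a / b \<le> ln b - ln a" and "ln b - ln a \<le> b / a - 1"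
proof -
  have "ln (a / b) \<le> a / b - 1" using assms by (intro ln_le_minus_one) simp
  thus "1 - a / b \<le> ln b - ln a" using assms by (simp add: ln_div)
  have "ln (b / a) \<le> b / a - 1" using assms by (intro ln_le_minus_one) simp
  thus "ln b - ln a \<le> b / a - 1" using assms by (simp add: ln_div)
qed

lemma mertens_sum_increment_bounds:
  assumes "k \<ge> 2"
  defines "d \<equiv> 1 / ln (real k) - 1 / ln (real (Suc k))"
  shows "ln (ln (real (Suc k))) - ln (ln (real k)) - 7/2 * d \<le> mertens_sum k * d"
    and "mertens_sum k * d \<le> ln (ln (real (Suc k))) - ln (ln (real k)) + 3/2 * d"
proof -
  define a b where "a = ln (real k)" and "b = ln (real (Suc k))"
  have a: "0 < a" "a < b" using assms(1) by (simp_all add: a_def b_def)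
  have d: "d = 1/a - 1/b" "d \<ge> 0"
    using a frac_le[of 1 1 a b] by (simp_all add: d_def a_def b_def)
  have "b - a \<le> 1 / real k" unfolding a_def b_def using assms(1) by (intro ln_Suc_minus_ln_le) simp
  also have "\<dots> \<le> 1/2" using assms(1) by (simp add: field_simps)
  finally have "(b - a) * d \<le> d / 2" using d(2) by (simp add: mult_right_mono[of _ "1/2" d, simplified])
  moreover have "b / a - 1 = a * d + (b - a) * d" "1 - a / b = a * d"
    using a by (simp_all add: d(1) field_simps)
  ultimately have lower: "ln b - ln a \<le> a * d + d / 2" and upper: "a * d \<le> ln b - ln a"
    using ln_diff_bounds[of a b] a by linarith+
  have "(a - 3) * d \<le> mertens_sum k * d"
    using mertens_sum_ge[of k] assms(1) d(2) by (intro mult_right_mono) (simp_all add: a_def)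
  thus "ln (ln (real (Suc k))) - ln (ln (real k)) - 7/2 * d \<le> mertens_sum k * d"
    using lower by (simp add: a_def b_def algebra_simps)
  have "mertens_sum k * d \<le> (a + 3/2) * d"
    using mertens_sum_le[of k] ln_4_le assms(1) d(2) by (intro mult_right_mono) (simp_all add: a_def)
  thus "mertens_sum k * d \<le> ln (ln (real (Suc k))) - ln (ln (real k)) + 3/2 * d"
    using upper by (simp add: a_def b_def algebra_simps)
qed

lemma mertens_remainder_diff_le:
  assumes "2 \<le> m" "m \<le> n"
  shows "\<bar>mertens_remainder m - mertens_remainder n\<bar> \<le> 5 / ln (real m)"
proof -
  define g where "g k = 1 / ln (real k)" for k
  define L where "L = ln (ln (real n)) - ln (ln (real m))"
  define \<Sigma> where "\<Sigma> = (\<Sum>k=m..<n. mertens_sum k * (g k - g (Suc k)))"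
  have tel: "(\<Sum>k=m..<n. ln (ln (real (Suc k))) - ln (ln (real k))) = L"
            "(\<Sum>k=m..<n. g k - g (Suc k)) = g m - g n"
    using sum_Suc_diff'[OF assms(2), of "\<lambda>k. ln (ln (real k))"]
          sum_Suc_diff'[OF assms(2), of "\<lambda>k. - g k"]
    by (simp_all add: L_def)
  have "(\<Sum>k=m..<n. ln (ln (real (Suc k))) - ln (ln (real k)) - 7/2 * (g k - g (Suc k))) \<le> \<Sigma>"
    unfolding \<Sigma>_def g_def using assms by (intro sum_mono mertens_sum_increment_bounds(1)) auto
  hence lower: "L - 7/2 * (g m - g n) \<le> \<Sigma>"
    using tel by (simp only: sum_subtractf sum_distrib_left[symmetric])
  have "\<Sigma> \<le> (\<Sum>k=m..<n. ln (ln (real (Suc k))) - ln (ln (real k)) + 3/2 * (g k - g (Suc k)))"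
    unfolding \<Sigma>_def g_def using assms by (intro sum_mono mertens_sum_increment_bounds(2)) auto
  hence upper: "\<Sigma> \<le> L + 3/2 * (g m - g n)"
    using tel by (simp only: sum.distrib sum_distrib_left[symmetric])
  have "mertens_remainder n - mertens_remainder m =
          mertens_sum n / ln (real n) - mertens_sum m / ln (real m) + \<Sigma> - L"
    using prime_recip_sum_by_parts[OF assms]
    by (simp add: mertens_remainder_def L_def \<Sigma>_def g_def)
  moreover have "1 - 3 * g m \<le> mertens_sum m / ln (real m)"
                "mertens_sum m / ln (real m) \<le> 1 + 3/2 * g m"
                "1 - 3 * g n \<le> mertens_sum n / ln (real n)"
                "mertens_sum n / ln (real n) \<le> 1 + 3/2 * g n"
    using mertens_sum_div_ln_bounds[of m] mertens_sum_div_ln_bounds[of n] assms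
    by (simp_all add: g_def)
  moreover have "0 < g m" "0 < g n" "5 / ln (real m) = 5 * g m" using assms by (simp_all add: g_def)
  ultimately show ?thesis
    using lower upper unfolding abs_le_iff by argo
qed

lemma mertens_remainder_convergent: "convergent mertens_remainder"
proof (rule Cauchy_convergent, rule CauchyI)
  fix e :: real assume "e > 0"
  have "(\<lambda>n. 5 / ln (real n)) \<longlonglongrightarrow> 0" by real_asymp
  then obtain N where N: "\<And>n. n \<ge> N \<Longrightarrow> 5 / ln (real n) < e"
    using \<open>e > 0\<close> by (metis (no_types, lifting) eventually_sequentially order_tendstoD(2))
  have close: "\<bar>mertens_remainder m - mertens_remainder n\<bar> < e" if "max N 2 \<le> m" "m \<le> n" for m n
    using mertens_remainder_diff_le[of m n] N[of m] that by simp
  show "\<exists>M. \<forall>m\<ge>M. \<forall>n\<ge>M. norm (mertens_remainder m - mertens_remainder n) < e"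
  proof (intro exI allI impI)
    fix m n assume "max N 2 \<le> m" "max N 2 \<le> n"
    thus "norm (mertens_remainder m - mertens_remainder n) < e"
      using close[of m n] close[of n m] by (cases "m \<le> n") (simp_all add: abs_minus_commute)
  qed
qed

lemma ln_ln_floor_minus_ln_ln_tendsto:
  "((\<lambda>x::real. ln (ln (real (nat \<lfloor>x\<rfloor>))) - ln (ln x)) \<longlongrightarrow> 0) at_top"
proof (rule tendsto_sandwich)
  show "((\<lambda>x::real. ln (ln (x - 1)) - ln (ln x)) \<longlongrightarrow> 0) at_top" by real_asymp
  show "\<forall>\<^sub>F x in at_top. ln (ln (x - 1)) - ln (ln x) \<le> ln (ln (real (nat \<lfloor>x\<rfloor>))) - ln (ln x)"
    using eventually_ge_at_top[of "3::real"]
  proof eventually_elim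
    case (elim x)
    have "x - 1 \<le> real (nat \<lfloor>x\<rfloor>)" "1 < x - 1" using elim by linarith+
    hence "0 < ln (x - 1)" "ln (x - 1) \<le> ln (real (nat \<lfloor>x\<rfloor>))" by simp_all
    thus ?case by simp
  qed
  show "\<forall>\<^sub>F x in at_top. ln (ln (real (nat \<lfloor>x\<rfloor>))) - ln (ln x) \<le> 0"
    using eventually_ge_at_top[of "3::real"]
  proof eventually_elim
    case (elim x)
    have "real (nat \<lfloor>x\<rfloor>) \<le> x" "1 < real (nat \<lfloor>x\<rfloor>)" using elim by linarith+
    thus ?case by simp
  qed
qed simp

lemma mertens_remainder_tendsto: "mertens_remainder \<longlonglongrightarrow> meissel_mertens"
proof -
  define F where "F x = (\<Sum>q\<in>{q::nat. prime q \<and> real q \<le> x}. 1 / real q) - ln (ln x)" for x :: real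
  obtain c where c: "mertens_remainder \<longlonglongrightarrow> c"
    using mertens_remainder_convergent by (auto simp: convergent_def)
  have "filterlim (\<lambda>x::real. nat \<lfloor>x\<rfloor>) sequentially at_top"
    by (rule filterlim_compose[OF filterlim_nat_sequentially filterlim_floor_sequentially])
  hence "((\<lambda>x::real. mertens_remainder (nat \<lfloor>x\<rfloor>)) \<longlongrightarrow> c) at_top"
    using filterlim_compose[OF c] by blast
  moreover note ln_ln_floor_minus_ln_ln_tendsto
  ultimately have "((\<lambda>x. mertens_remainder (nat \<lfloor>x\<rfloor>) + (ln (ln (real (nat \<lfloor>x\<rfloor>))) - ln (ln x))) \<longlongrightarrow> c) at_top"
    using tendsto_add by fastforce
  moreover have "\<forall>\<^sub>F x in at_top. mertens_remainder (nat \<lfloor>x\<rfloor>) + (ln (ln (real (nat \<lfloor>x\<rfloor>))) - ln (ln x)) = F x"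
    using eventually_ge_at_top[of "0::real"]
  proof eventually_elim
    case (elim x)
    have "real q \<le> x \<longleftrightarrow> q \<le> nat \<lfloor>x\<rfloor>" for q
    proof
      assume "q \<le> nat \<lfloor>x\<rfloor>"
      thus "real q \<le> x" using of_nat_floor[OF elim] by (meson of_nat_le_iff order_trans)
    qed (rule le_nat_floor)
    hence "{q::nat. prime q \<and> real q \<le> x} = {q. prime q \<and> q \<le> nat \<lfloor>x\<rfloor>}"
      by auto
    thus ?case by (simp add: F_def mertens_remainder_def prime_recip_sum_def)
  qed
  ultimately have "(F \<longlongrightarrow> c) at_top" by (rule Lim_transform_eventually)
  hence "meissel_mertens = c" unfolding meissel_mertens_def F_def by (intro tendsto_Lim) auto
  thus ?thesis using c by simp
qed

lemma mertens_remainder_le: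
  assumes "m \<ge> 2"
  shows "mertens_remainder m \<le> meissel_mertens + 5 / ln (real m)"
proof -
  have "(\<lambda>n. mertens_remainder m - mertens_remainder n) \<longlonglongrightarrow> mertens_remainder m - meissel_mertens"
    by (intro tendsto_intros mertens_remainder_tendsto)
  moreover have "\<forall>n\<ge>m. mertens_remainder m - mertens_remainder n \<le> 5 / ln (real m)"
    using mertens_remainder_diff_le assms by fastforce
  ultimately have "mertens_remainder m - meissel_mertens \<le> 5 / ln (real m)"
    by (intro LIMSEQ_le_const2) auto
  thus ?thesis by simp
qed

lemma nthprime_prime: "prime (nthprime l)"
  unfolding nthprime_def using enumerate_in_set[OF primes_infinite] by simp

lemma nthprime_le_iff: "1 \<le> a \<Longrightarrow> 1 \<le> b \<Longrightarrow> nthprime a \<le> nthprime b \<longleftrightarrow> a \<le> b"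
  unfolding nthprime_def using enumerate_mono_le_iff[OF primes_infinite, of "a-1" "b-1"] by auto

lemma nthprime_image: "nthprime ` {1..k+1} = {q. prime q \<and> q \<le> nthprime (k+1)}"
proof
  show "nthprime ` {1..k+1} \<subseteq> {q. prime q \<and> q \<le> nthprime (k+1)}"
    using nthprime_prime nthprime_le_iff by auto
  show "{q. prime q \<and> q \<le> nthprime (k+1)} \<subseteq> nthprime ` {1..k+1}"
  proof
    fix q assume q: "q \<in> {q. prime q \<and> q \<le> nthprime (k+1)}"
    then obtain i where "enumerate {q::nat. prime q} i = q"
      using enumerate_Ex[OF primes_infinite, of q] by auto
    hence i: "nthprime (i+1) = q" by (simp add: nthprime_def)
    hence "i + 1 \<le> k + 1" using q nthprime_le_iff[of "i+1" "k+1"] by simp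
    thus "q \<in> nthprime ` {1..k+1}" using i by (intro image_eqI[of _ _ "i+1"]) auto
  qed
qed

lemma inj_on_nthprime: "inj_on nthprime {1..k+1}"
  by (rule inj_onI) (metis atLeastAtMost_iff le_antisym nthprime_le_iff order_refl)

lemma prime_recip_sum_nthprime:
  "prime_recip_sum (nthprime (k+1)) = (\<Sum>l=1..k+1. 1 / real (nthprime l))"
  unfolding prime_recip_sum_def nthprime_image[symmetric]
  by (subst sum.reindex[OF inj_on_nthprime]) simp

lemma A_le_exp_prime_recip_sum:
  assumes "j \<in> {1..k+1}"
  shows "A j k \<le> exp (prime_recip_sum (nthprime (k+1)) - 1 / real (nthprime j))"
proof -
  have "A j k = (\<Prod>l\<in>{1..k+1} - {j}. 1 + 1 / real (nthprime l))"
    unfolding A_def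
    using nthprime_prime prime_gt_0_nat by (intro prod.cong refl) (simp add: field_simps)
  also have "\<dots> \<le> (\<Prod>l\<in>{1..k+1} - {j}. exp (1 / real (nthprime l)))"
    by (intro prod_mono conjI exp_ge_add_one_self) (simp add: add_nonneg_nonneg)
  also have "\<dots> = exp (\<Sum>l\<in>{1..k+1} - {j}. 1 / real (nthprime l))"
    by (simp add: exp_sum)
  also have "(\<Sum>l\<in>{1..k+1} - {j}. 1 / real (nthprime l)) =
               prime_recip_sum (nthprime (k+1)) - 1 / real (nthprime j)"
    using assms by (simp only: prime_recip_sum_nthprime sum_diff1 finite_atLeastAtMost if_True)
  finally show ?thesis .
qed

theorem mainTheorem8:
  fixes j k :: nat
  assumes "j \<ge> 1" and "k + 1 \<ge> j"
  shows "A j k \<le> ln (real (nthprime (k+1))) *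
           exp (meissel_mertens - 1 / real (nthprime j) + 5 / ln (real (nthprime (k+1))))"
proof -
  define P where "P = nthprime (k+1)"
  define x where "x = 1 / real (nthprime j)"
  have P: "P \<ge> 2" unfolding P_def using nthprime_prime prime_ge_2_nat by blast
  hence ln_P: "ln (real P) > 0" by simp
  have "A j k \<le> exp (prime_recip_sum P - x)"
    unfolding P_def x_def using assms by (intro A_le_exp_prime_recip_sum) simp
  also have "\<dots> = exp (ln (ln (real P)) + (mertens_remainder P - x))"
    by (simp add: mertens_remainder_def)
  also have "\<dots> = ln (real P) * exp (mertens_remainder P - x)"
    using ln_P by (simp add: exp_add)
  also have "\<dots> \<le> ln (real P) * exp (meissel_mertens + 5 / ln (real P) - x)"
    using mertens_remainder_le[OF P] ln_P by (intro mult_left_mono) auto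
  finally show ?thesis by (simp add: P_def x_def algebra_simps)
qed

end
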